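(* For every constant $\varepsilon \in (0, 1]$, there exists a semi-streaming $(3+\varepsilon)$-approximation algorithm for maximizing a non-negative submodular function subject to a cardinality constraint. The algorithm stores at most $O(k\varepsilon^{-2}\log k)$ elements.
   Context: Problem: given a finite ground set $N$, a non-negative submodular function $f\colon 2^N\to\mathbb{R}_{\ge 0}$ (accessed through a value oracle returning $f(S)$ for any $S\subseteq N$) and a positive integer $k$, find $S\subseteq N$ with $|S|\le k$ maximizing $f(S)$. Let $OPT$ denote an optimal solution. A (possibly randomized) algorithm is a $\beta$-approximation if its output $S$ is always feasible and satisfies $\mathbb{E}[f(S)]\ge f(OPT)/\beta$. In the data stream model the elements of $N$ arrive one at a time in an arbitrary order, and the algorithm processes them in a single pass; a semi-streaming algorithm is a data stream algorithm whose memory is $O(k\cdot \mathrm{polylog}(k,|N|))$. (No bound on running time is claimed.) *)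

theory Defs
  imports "HOL-Probability.Probability"
begin

definition nonneg_submodular_on :: "'a set \<Rightarrow> ('a set \<Rightarrow> real) \<Rightarrow> bool" where
  "nonneg_submodular_on N f \<longleftrightarrow>
     (\<forall>S. S \<subseteq> N \<longrightarrow> 0 \<le> f S) \<and>
     (\<forall>A B. A \<subseteq> N \<longrightarrow> B \<subseteq> N \<longrightarrow> f (A \<union> B) + f (A \<inter> B) \<le> f A + f B)"

text \<open>The memory of the algorithm is a list of stored elements M together with a
list of auxiliary real-valued words. The algorithm never sees element identities:
when a new element x arrives it only sees the value oracle restricted to subsets of
the list L = M @ [x] (a view indexed by positions), the length of L, the parameter k
and its auxiliary words. It then randomly chooses which positions of L to keep and
its new auxiliary words.\<close>

type_synonym view = "nat set \<Rightarrow> real"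
type_synonym stepfn = "nat \<Rightarrow> view \<Rightarrow> nat \<Rightarrow> real list \<Rightarrow> (nat list \<times> real list) pmf"
type_synonym finfn = "nat \<Rightarrow> view \<Rightarrow> nat \<Rightarrow> real list \<Rightarrow> nat set pmf"

definition view_of :: "('a set \<Rightarrow> real) \<Rightarrow> 'a list \<Rightarrow> view" where
  "view_of f L = (\<lambda>I. f ((\<lambda>i. L ! i) ` (I \<inter> {..<length L})))"

definition select :: "'a list \<Rightarrow> nat list \<Rightarrow> 'a list" where
  "select L is = map (\<lambda>i. L ! i) (filter (\<lambda>i. i < length L) is)"

fun run_from :: "stepfn \<Rightarrow> nat \<Rightarrow> ('a set \<Rightarrow> real) \<Rightarrow> ('a list \<times> real list)
                 \<Rightarrow> 'a list \<Rightarrow> ('a list \<times> real list) pmf" where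
  "run_from st k f s [] = return_pmf s"
| "run_from st k f (M, a) (x # xs) =
     bind_pmf (st k (view_of f (M @ [x])) (length (M @ [x])) a)
       (\<lambda>(is, a'). run_from st k f (select (M @ [x]) is, a') xs)"

definition run :: "stepfn \<Rightarrow> nat \<Rightarrow> ('a set \<Rightarrow> real) \<Rightarrow> 'a list \<Rightarrow> ('a list \<times> real list) pmf" where
  "run st k f xs = run_from st k f ([], []) xs"

definition stream_output :: "stepfn \<Rightarrow> finfn \<Rightarrow> nat \<Rightarrow> ('a set \<Rightarrow> real) \<Rightarrow> 'a list \<Rightarrow> 'a set pmf" where
  "stream_output st fin k f xs =
     bind_pmf (run st k f xs)
       (\<lambda>(M, a). map_pmf (\<lambda>I. (\<lambda>i. M ! i) ` (I \<inter> {..<length M}))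
                          (fin k (view_of f M) (length M) a))"

end

theory Submission
  imports Defs
begin

text \<open>
  Guess a threshold \<open>\<tau>\<close> close to \<open>f OPT / ((3 + 2 / (l - 1)) k)\<close> and run \<open>l \<approx> 4 / \<epsilon>\<close>
  copies of the threshold greedy algorithm in parallel: an arriving element joins the first copy
  that has fewer than \<open>k\<close> elements and to which its marginal value is at least \<open>\<tau>\<close>. If a copy
  fills up, it is worth at least \<open>k \<tau>\<close>. Otherwise every element of \<open>OPT\<close> outside the disjoint
  copies \<open>S\<^sub>i\<close> has marginal value below \<open>\<tau>\<close> with respect to each of them, and submodularity gives
  \<open>(l - 1) f OPT \<le> \<Sum>\<^sub>i f S\<^sub>i + (l - 1) f (OPT \<inter> \<Union>\<^sub>i S\<^sub>i) + l k \<tau>\<close>, so some \<open>S\<^sub>i\<close> or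
  \<open>OPT \<inter> \<Union>\<^sub>i S\<^sub>i\<close> is worth at least \<open>k \<tau>\<close>. Either way the stored elements contain a feasible
  set of value at least \<open>f OPT / (3 + \<epsilon>)\<close>, and the algorithm outputs the best such set.

  As \<open>f OPT\<close> is unknown, all thresholds \<open>\<tau> = (1 + \<epsilon> / 8)\<^sup>j\<close> in \<open>[m / k, m]\<close> are run, where
  \<open>m\<close> is the largest singleton value seen so far; when \<open>f OPT < (3 + \<epsilon>) m\<close> the stored best
  singleton suffices. There are \<open>O(log k / \<epsilon>)\<close> such thresholds with \<open>l k\<close> stored elements each.
  A threshold entering the window exceeds every singleton value seen before, so its copies would
  still be empty and can be started late.
\<close>

lemma nonneg_submodular_on_nonneg:
  "nonneg_submodular_on N f \<Longrightarrow> S \<subseteq> N \<Longrightarrow> 0 \<le> f S"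
  unfolding nonneg_submodular_on_def by blast

lemma nonneg_submodular_on_union_inter:
  "nonneg_submodular_on N f \<Longrightarrow> A \<subseteq> N \<Longrightarrow> B \<subseteq> N \<Longrightarrow> f (A \<union> B) + f (A \<inter> B) \<le> f A + f B"
  unfolding nonneg_submodular_on_def by blast

lemma submodular_marginal_antimono:
  assumes sm: "nonneg_submodular_on N f" and "A \<subseteq> B" "B \<subseteq> N" "x \<in> N" "x \<notin> B"
  shows "f (insert x B) - f B \<le> f (insert x A) - f A"
proof -
  have "f (B \<union> insert x A) + f (B \<inter> insert x A) \<le> f B + f (insert x A)"
    using nonneg_submodular_on_union_inter[OF sm, of B "insert x A"] assms by blast
  moreover have "B \<union> insert x A = insert x B" "B \<inter> insert x A = A"
    using assms by auto
  ultimately show ?thesis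
    by simp
qed

lemma submodular_le_sum_marginals:
  assumes sm: "nonneg_submodular_on N f" and "finite X" "A \<subseteq> N" "X \<subseteq> N"
  shows "f (A \<union> X) \<le> f A + (\<Sum>x\<in>X. f (insert x A) - f A)"
  using \<open>finite X\<close> \<open>X \<subseteq> N\<close>
proof (induction X rule: finite_induct)
  case empty
  then show ?case by simp
next
  case (insert x X)
  show ?case
  proof (cases "x \<in> A")
    case True
    then show ?thesis
      using insert by (simp add: insert_absorb)
  next
    case False
    have "f (insert x (A \<union> X)) - f (A \<union> X) \<le> f (insert x A) - f A"
      using submodular_marginal_antimono[OF sm, of A "A \<union> X" x] insert \<open>A \<subseteq> N\<close> False by auto
    then show ?thesis
      using insert by simp
  qed
qed

lemma submodular_le_diff_add_inter:
  assumes sm: "nonneg_submodular_on N f" and "A \<subseteq> N"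
  shows "f A \<le> f (A - B) + f (A \<inter> B)"
proof -
  have "f ((A - B) \<union> (A \<inter> B)) + f ((A - B) \<inter> (A \<inter> B)) \<le> f (A - B) + f (A \<inter> B)"
    using nonneg_submodular_on_union_inter[OF sm, of "A - B" "A \<inter> B"] assms(2) by blast
  moreover have "(A - B) \<union> (A \<inter> B) = A" "(A - B) \<inter> (A \<inter> B) = {}"
    by auto
  moreover have "0 \<le> f {}"
    using nonneg_submodular_on_nonneg[OF sm] by simp
  ultimately show ?thesis
    by simp
qed

lemma submodular_disjoint_UN:
  assumes sm: "nonneg_submodular_on N f" and "Q \<subseteq> N" and S: "\<And>i. i < l \<Longrightarrow> S i \<subseteq> N"
    and disj: "\<And>i i'. i < l \<Longrightarrow> i' < l \<Longrightarrow> i \<noteq> i' \<Longrightarrow> S i \<inter> S i' = {}"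
  shows "(real l - 1) * f Q + f ((\<Union>i<l. S i) \<union> Q) \<le> (\<Sum>i<l. f (S i \<union> Q))"
  using S disj
proof (induction l)
  case 0
  then show ?case by simp
next
  case (Suc l)
  let ?U = "(\<Union>i<l. S i) \<union> Q"
  have IH: "(real l - 1) * f Q + f ?U \<le> (\<Sum>i<l. f (S i \<union> Q))"
    using Suc by simp
  have "?U \<union> (S l \<union> Q) = (\<Union>i<Suc l. S i) \<union> Q"
    by (auto simp: lessThan_Suc)
  moreover have "?U \<inter> (S l \<union> Q) = Q"
    using Suc.prems(2)[of _ l] by (auto simp: less_Suc_eq)
  moreover have "f (?U \<union> (S l \<union> Q)) + f (?U \<inter> (S l \<union> Q)) \<le> f ?U + f (S l \<union> Q)"
    using nonneg_submodular_on_union_inter[OF sm] Suc.prems(1) \<open>Q \<subseteq> N\<close>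
    by (metis UN_least Un_least lessThan_iff less_Suc_eq)
  ultimately show ?case
    using IH by (simp add: algebra_simps)
qed

definition max_singleton :: "('a set \<Rightarrow> real) \<Rightarrow> 'a set \<Rightarrow> real" where
  "max_singleton f A = Max (insert 0 ((\<lambda>y. f {y}) ` A))"

lemma max_singleton_nonneg: "finite A \<Longrightarrow> 0 \<le> max_singleton f A"
  unfolding max_singleton_def by simp

lemma max_singleton_ge: "finite A \<Longrightarrow> y \<in> A \<Longrightarrow> f {y} \<le> max_singleton f A"
  unfolding max_singleton_def by simp

lemma max_singleton_empty [simp]: "max_singleton f {} = 0"
  by (simp add: max_singleton_def)

lemma max_singleton_insert:
  assumes "finite A"
  shows "max_singleton f (insert x A) = max (f {x}) (max_singleton f A)"
proof -
  have "insert 0 ((\<lambda>y. f {y}) ` insert x A) = insert (f {x}) (insert 0 ((\<lambda>y. f {y}) ` A))"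
    by auto
  then show ?thesis
    using assms by (simp add: max_singleton_def)
qed

lemma max_singleton_attained:
  assumes "finite A" "0 < max_singleton f A"
  obtains y where "y \<in> A" "f {y} = max_singleton f A"
proof -
  have "max_singleton f A \<in> insert 0 ((\<lambda>y. f {y}) ` A)"
    unfolding max_singleton_def using assms(1) by (intro Max_in) auto
  then show ?thesis
    using assms(2) that by auto
qed

lemma submodular_le_card_mult_max_singleton:
  assumes sm: "nonneg_submodular_on N f" and "finite A" "A \<subseteq> N" "T \<subseteq> A" "T \<noteq> {}"
  shows "f T \<le> real (card T) * max_singleton f A"
proof -
  have T: "finite T" "T \<subseteq> N"
    using assms finite_subset by auto
  have "f T \<le> f {} + (\<Sum>x\<in>T. f {x} - f {})"
    using submodular_le_sum_marginals[OF sm T(1), of "{}"] T by simp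
  also have "\<dots> \<le> f {} + real (card T) * (max_singleton f A - f {})"
    using max_singleton_ge[OF \<open>finite A\<close>] \<open>T \<subseteq> A\<close>
    by (intro add_left_mono sum_bounded_above) auto
  also have "\<dots> \<le> real (card T) * max_singleton f A"
  proof -
    have "1 \<le> real (card T)"
      using T(1) \<open>T \<noteq> {}\<close> by (simp add: Suc_le_eq card_gt_0_iff)
    moreover have "0 \<le> f {}"
      using nonneg_submodular_on_nonneg[OF sm] by simp
    ultimately have "f {} \<le> real (card T) * f {}"
      by (metis mult_right_mono mult_1)
    then show ?thesis
      by (simp add: algebra_simps)
  qed
  finally show ?thesis .
qed

section \<open>Parallel copies of the threshold greedy algorithm\<close>

definition fits :: "('a set \<Rightarrow> real) \<Rightarrow> nat \<Rightarrow> real \<Rightarrow> 'a set \<Rightarrow> 'a \<Rightarrow> bool" where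
  "fits f k t S x \<longleftrightarrow> card S < k \<and> t \<le> f (insert x S) - f S"

definition threshold_step ::
    "('a set \<Rightarrow> real) \<Rightarrow> nat \<Rightarrow> nat \<Rightarrow> real \<Rightarrow> (nat \<Rightarrow> 'a set) \<Rightarrow> 'a \<Rightarrow> nat \<Rightarrow> 'a set" where
  "threshold_step f k l t S x i =
     (if find (\<lambda>i'. fits f k t (S i') x) [0..<l] = Some i then insert x (S i) else S i)"

definition threshold_copies :: "('a set \<Rightarrow> real) \<Rightarrow> nat \<Rightarrow> nat \<Rightarrow> real \<Rightarrow> 'a list \<Rightarrow> nat \<Rightarrow> 'a set" where
  "threshold_copies f k l t p = foldl (threshold_step f k l t) (\<lambda>i. {}) p"

lemma threshold_copies_Nil [simp]: "threshold_copies f k l t [] i = {}"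
  by (simp add: threshold_copies_def)

lemma threshold_copies_snoc:
  "threshold_copies f k l t (p @ [x]) i =
     (if find (\<lambda>i'. fits f k t (threshold_copies f k l t p i') x) [0..<l] = Some i
      then insert x (threshold_copies f k l t p i) else threshold_copies f k l t p i)"
  by (simp add: threshold_copies_def threshold_step_def)

lemma find_upt_Some_less: "find P [0..<l] = Some i \<Longrightarrow> i < l"
  by (auto simp: find_Some_iff)

lemma threshold_copies_subset: "threshold_copies f k l t p i \<subseteq> set p"
  by (induction p rule: rev_induct) (auto simp: threshold_copies_snoc)

lemma finite_threshold_copies [simp]: "finite (threshold_copies f k l t p i)"
  by (rule finite_subset[OF threshold_copies_subset]) simp

lemma card_threshold_copies: "card (threshold_copies f k l t p i) \<le> k"
proof (induction p rule: rev_induct)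
  case (snoc x p)
  let ?S = "threshold_copies f k l t p"
  show ?case
  proof (cases "find (\<lambda>i'. fits f k t (?S i') x) [0..<l] = Some i")
    case True
    then have "card (?S i) < k"
      by (auto simp: find_Some_iff fits_def)
    then show ?thesis
      using True by (simp add: threshold_copies_snoc card_insert_if)
  next
    case False
    then show ?thesis
      using snoc by (simp add: threshold_copies_snoc)
  qed
qed simp

lemma threshold_copies_disjoint:
  "distinct p \<Longrightarrow> i \<noteq> i' \<Longrightarrow> threshold_copies f k l t p i \<inter> threshold_copies f k l t p i' = {}"
proof (induction p rule: rev_induct)
  case (snoc x p)
  then have "x \<notin> threshold_copies f k l t p i" "x \<notin> threshold_copies f k l t p i'"
    using threshold_copies_subset by fastforce+
  then show ?case
    using snoc by (auto simp: threshold_copies_snoc)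
qed simp

lemma threshold_copies_mono: "threshold_copies f k l t p i \<subseteq> threshold_copies f k l t (p @ q) i"
proof (induction q rule: rev_induct)
  case (snoc x q)
  then show ?case
    by (auto simp: threshold_copies_snoc simp flip: append_assoc)
qed simp

lemma threshold_copies_below_threshold:
  assumes "0 \<le> f {}" "\<forall>y\<in>set p. f {y} < t"
  shows "threshold_copies f k l t p i = {}"
proof -
  have "threshold_copies f k l t p = (\<lambda>i. {})"
    using assms(2)
  proof (induction p rule: rev_induct)
    case (snoc x p)
    then have "\<not> fits f k t {} x"
      using assms(1) by (auto simp: fits_def)
    then have "find (\<lambda>i'. fits f k t (threshold_copies f k l t p i') x) [0..<l] = None"
      using snoc by (simp add: find_None_iff)
    then show ?case
      using snoc by (simp add: threshold_copies_snoc fun_eq_iff)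
  qed (simp add: fun_eq_iff)
  then show ?thesis by simp
qed

lemma threshold_copies_value:
  assumes "distinct p"
  shows "t * card (threshold_copies f k l t p i) \<le> f (threshold_copies f k l t p i) - f {}"
  using assms
proof (induction p rule: rev_induct)
  case (snoc x p)
  let ?S = "threshold_copies f k l t p i"
  have IH: "t * card ?S \<le> f ?S - f {}" and "x \<notin> ?S"
    using snoc threshold_copies_subset by fastforce+
  show ?case
  proof (cases "find (\<lambda>i'. fits f k t (threshold_copies f k l t p i') x) [0..<l] = Some i")
    case True
    then have "t \<le> f (insert x ?S) - f ?S"
      by (auto simp: find_Some_iff fits_def)
    then show ?thesis
      using True IH \<open>x \<notin> ?S\<close> by (simp add: threshold_copies_snoc algebra_simps)
  next
    case False
    then show ?thesis
      using IH by (simp add: threshold_copies_snoc)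
  qed
qed simp

text \<open>An element that ended up in no copy, at a time when no copy is full, was rejected by every
  copy on arrival; by submodularity its marginal value can only have decreased since.\<close>

lemma threshold_copies_reject:
  assumes sm: "nonneg_submodular_on N f" and "distinct p" "set p \<subseteq> N" "x \<in> set p"
    and notin: "\<And>i. i < l \<Longrightarrow> x \<notin> threshold_copies f k l t p i"
    and not_full: "\<And>i. i < l \<Longrightarrow> card (threshold_copies f k l t p i) < k"
    and "i < l"
  shows "f (insert x (threshold_copies f k l t p i)) - f (threshold_copies f k l t p i) < t"
proof -
  obtain p1 p2 where p: "p = p1 @ x # p2"
    using \<open>x \<in> set p\<close> split_list by metis
  let ?S = "threshold_copies f k l t p1"
  have none: "find (\<lambda>i'. fits f k t (?S i') x) [0..<l] = None"
  proof (rule ccontr)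
    assume "find (\<lambda>i'. fits f k t (?S i') x) [0..<l] \<noteq> None"
    then obtain i0 where i0: "find (\<lambda>i'. fits f k t (?S i') x) [0..<l] = Some i0"
      by auto
    have "x \<in> threshold_copies f k l t (p1 @ [x]) i0"
      using i0 by (simp add: threshold_copies_snoc)
    also have "\<dots> \<subseteq> threshold_copies f k l t p i0"
      using threshold_copies_mono[of f k l t "p1 @ [x]" i0 p2] p by simp
    finally show False
      using notin find_upt_Some_less[OF i0] by blast
  qed
  have sub: "?S i \<subseteq> threshold_copies f k l t p i"
    using threshold_copies_mono[of f k l t p1 i "x # p2"] p by simp
  then have "card (?S i) < k"
    using not_full[OF \<open>i < l\<close>] card_mono[OF finite_threshold_copies sub] by linarith
  then have "f (insert x (?S i)) - f (?S i) < t"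
    using none \<open>i < l\<close> by (auto simp: find_None_iff fits_def)
  moreover have "f (insert x (threshold_copies f k l t p i)) - f (threshold_copies f k l t p i)
      \<le> f (insert x (?S i)) - f (?S i)"
  proof (rule submodular_marginal_antimono[OF sm sub])
    show "threshold_copies f k l t p i \<subseteq> N" "x \<in> N"
      using threshold_copies_subset[of f k l t p i] assms(3,4) by auto
  qed (use notin \<open>i < l\<close> in blast)
  ultimately show ?thesis
    by simp
qed

text \<open>Adding the uncovered part of \<open>T\<close> to any \<open>S i\<close> costs at most \<open>k t\<close>; summing over the
  disjoint \<open>S i\<close> by submodularity bounds \<open>l - 1\<close> copies of the uncovered part, and the covered
  part is accounted for separately.\<close>

lemma rejecting_disjoint_sets_bound:
  fixes S :: "nat \<Rightarrow> 'a set"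
  assumes sm: "nonneg_submodular_on N f" and T: "finite T" "T \<subseteq> N" "card T \<le> k"
    and "1 \<le> l" "0 \<le> t"
    and S: "\<And>i. i < l \<Longrightarrow> S i \<subseteq> N"
    and disj: "\<And>i i'. i < l \<Longrightarrow> i' < l \<Longrightarrow> i \<noteq> i' \<Longrightarrow> S i \<inter> S i' = {}"
    and reject: "\<And>x i. x \<in> T - (\<Union>i<l. S i) \<Longrightarrow> i < l \<Longrightarrow> f (insert x (S i)) - f (S i) \<le> t"
  shows "(real l - 1) * f T
           \<le> (\<Sum>i<l. f (S i)) + (real l - 1) * f (T \<inter> (\<Union>i<l. S i)) + real l * (real k * t)"
proof -
  define U where "U = (\<Union>i<l. S i)"
  define T' where "T' = T - U"
  have U: "U \<subseteq> N"
    using S by (auto simp: U_def)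
  have T': "finite T'" "T' \<subseteq> N" "card T' \<le> k"
    using T card_mono[OF T(1), of T'] by (auto simp: T'_def)
  have each: "f (S i \<union> T') \<le> f (S i) + real k * t" if "i < l" for i
  proof -
    have "f (S i \<union> T') \<le> f (S i) + (\<Sum>x\<in>T'. f (insert x (S i)) - f (S i))"
      using submodular_le_sum_marginals[OF sm T'(1) S[OF that] T'(2)] .
    also have "(\<Sum>x\<in>T'. f (insert x (S i)) - f (S i)) \<le> real (card T') * t"
      using reject that by (intro sum_bounded_above) (auto simp: T'_def U_def)
    also have "\<dots> \<le> real k * t"
      using T'(3) \<open>0 \<le> t\<close> by (intro mult_right_mono) auto
    finally show ?thesis
      by simp
  qed
  have "(real l - 1) * f T' \<le> (real l - 1) * f T' + f (U \<union> T')"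
    using nonneg_submodular_on_nonneg[OF sm] U T'(2) by simp
  also have "\<dots> \<le> (\<Sum>i<l. f (S i \<union> T'))"
    using submodular_disjoint_UN[OF sm T'(2) S disj] by (simp add: U_def)
  also have "\<dots> \<le> (\<Sum>i<l. f (S i) + real k * t)"
    using each by (intro sum_mono) auto
  finally have covered: "(real l - 1) * f T' \<le> (\<Sum>i<l. f (S i)) + real l * (real k * t)"
    by (simp add: sum.distrib)
  have "f T \<le> f T' + f (T \<inter> U)"
    unfolding T'_def using submodular_le_diff_add_inter[OF sm T(2)] .
  then have "(real l - 1) * f T \<le> (real l - 1) * f T' + (real l - 1) * f (T \<inter> U)"
    using \<open>1 \<le> l\<close> by (simp add: mult_left_mono flip: distrib_left)
  then show ?thesis
    using covered by (simp add: U_def)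
qed

lemma threshold_copies_full_value:
  assumes "distinct p" "0 \<le> f {}" "0 \<le> t" "k \<le> card (threshold_copies f k l t p i)"
  shows "real k * t \<le> f (threshold_copies f k l t p i)"
proof -
  have "real k * t \<le> t * card (threshold_copies f k l t p i)"
    using assms(3,4) by (simp add: mult.commute mult_left_mono)
  also have "\<dots> \<le> f (threshold_copies f k l t p i) - f {}"
    using threshold_copies_value[OF \<open>distinct p\<close>] .
  finally show ?thesis
    using assms(2) by simp
qed

lemma threshold_copies_not_full_bound:
  assumes sm: "nonneg_submodular_on N f" and "distinct p" "set p \<subseteq> N"
    and T: "T \<subseteq> set p" "card T \<le> k" and "1 \<le> l" "0 \<le> t"
    and not_full: "\<And>i. i < l \<Longrightarrow> card (threshold_copies f k l t p i) < k"
  shows "(real l - 1) * f T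
           \<le> (\<Sum>i<l. f (threshold_copies f k l t p i))
              + (real l - 1) * f (T \<inter> (\<Union>i<l. threshold_copies f k l t p i)) + real l * (real k * t)"
proof (rule rejecting_disjoint_sets_bound[OF sm _ _ T(2) \<open>1 \<le> l\<close> \<open>0 \<le> t\<close>])
  let ?S = "threshold_copies f k l t p"
  show "finite T" "T \<subseteq> N"
    using T(1) \<open>set p \<subseteq> N\<close> finite_subset by auto
  show "?S i \<subseteq> N" for i
    using threshold_copies_subset[of f k l t p i] \<open>set p \<subseteq> N\<close> by blast
  show "?S i \<inter> ?S i' = {}" if "i \<noteq> i'" for i i'
    using threshold_copies_disjoint[OF \<open>distinct p\<close> that] .
  show "f (insert x (?S i)) - f (?S i) \<le> t" if x: "x \<in> T - (\<Union>i<l. ?S i)" and "i < l" for x i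
  proof -
    have "f (insert x (?S i)) - f (?S i) < t"
    proof (rule threshold_copies_reject[OF sm \<open>distinct p\<close> \<open>set p \<subseteq> N\<close> _ _ not_full \<open>i < l\<close>])
      show "x \<in> set p"
        using x T(1) by auto
      show "x \<notin> ?S i'" if "i' < l" for i'
        using x that by auto
    qed
    then show ?thesis
      by simp
  qed
qed

text \<open>Either a copy filled up, or the bound above applies and, as all copies and the covered part
  of \<open>T\<close> are worth less than \<open>k t\<close>, contradicts the hypothesis on \<open>t\<close>.\<close>

lemma threshold_copies_large_subset:
  assumes sm: "nonneg_submodular_on N f" and "distinct p" "set p \<subseteq> N"
    and T: "T \<subseteq> set p" "card T \<le> k" and "1 \<le> l" "0 \<le> t"
    and large: "(3 * real l - 1) * (real k * t) \<le> (real l - 1) * f T"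
  shows "\<exists>B \<subseteq> (\<Union>i<l. threshold_copies f k l t p i). card B \<le> k \<and> real k * t \<le> f B"
proof (cases "\<exists>i<l. k \<le> card (threshold_copies f k l t p i)")
  case True
  then obtain i where i: "i < l" "k \<le> card (threshold_copies f k l t p i)"
    by blast
  have "real k * t \<le> f (threshold_copies f k l t p i)"
    using threshold_copies_full_value[OF \<open>distinct p\<close> _ \<open>0 \<le> t\<close> i(2)]
      nonneg_submodular_on_nonneg[OF sm] by simp
  moreover have "threshold_copies f k l t p i \<subseteq> (\<Union>i<l. threshold_copies f k l t p i)"
    using i(1) by blast
  ultimately show ?thesis
    using card_threshold_copies[of f k l t p i] by blast
next
  case False
  let ?S = "threshold_copies f k l t p" and ?U = "\<Union>i<l. threshold_copies f k l t p i"
  show ?thesis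
  proof (rule ccontr)
    assume "\<not> ?thesis"
    then have no_good: "f B < real k * t" if "B \<subseteq> ?U" "card B \<le> k" for B
      using that not_le by blast
    have "(\<Sum>i<l. f (?S i)) < (\<Sum>i<l. real k * t)"
      using no_good[OF _ card_threshold_copies[of f k l t p]] \<open>1 \<le> l\<close>
      by (intro sum_strict_mono) (auto simp: lessThan_empty_iff)
    moreover have "card (T \<inter> ?U) \<le> card T"
      using T(1) finite_subset by (intro card_mono) auto
    then have "(real l - 1) * f (T \<inter> ?U) \<le> (real l - 1) * (real k * t)"
      using T(2) no_good \<open>1 \<le> l\<close> by (intro mult_left_mono) (auto simp: less_imp_le)
    moreover have "(real l - 1) * f T
        \<le> (\<Sum>i<l. f (?S i)) + (real l - 1) * f (T \<inter> ?U) + real l * (real k * t)"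
      using threshold_copies_not_full_bound[OF sm \<open>distinct p\<close> \<open>set p \<subseteq> N\<close> T \<open>1 \<le> l\<close> \<open>0 \<le> t\<close>] False
      by (simp add: not_le)
    ultimately have "(real l - 1) * f T < (3 * real l - 1) * (real k * t)"
      by (simp add: algebra_simps)
    then show False
      using large by simp
  qed
qed

section \<open>Windows of geometric thresholds\<close>

definition window :: "real \<Rightarrow> nat \<Rightarrow> real \<Rightarrow> int set" where
  "window b k m = {j. m / real k \<le> b powr of_int j \<and> b powr of_int j \<le> m}"

lemma window_subset:
  assumes "1 < b" "1 \<le> k"
  shows "window b k m \<subseteq> {\<lceil>log b (m / real k)\<rceil>..\<lfloor>log b m\<rfloor>}"
proof
  fix j assume "j \<in> window b k m"
  then have lo: "m / real k \<le> b powr of_int j" and hi: "b powr of_int j \<le> m"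
    by (auto simp: window_def)
  have "0 < b powr of_int j"
    using assms by simp
  then have "0 < m"
    using hi by linarith
  then have "0 < m / real k"
    using assms by simp
  then have "log b (m / real k) \<le> of_int j" "of_int j \<le> log b m"
    using lo hi assms by (simp_all add: le_log_iff log_le_iff)
  then show "j \<in> {\<lceil>log b (m / real k)\<rceil>..\<lfloor>log b m\<rfloor>}"
    by (simp add: ceiling_le_iff le_floor_iff)
qed

lemma finite_window: "1 < b \<Longrightarrow> 1 \<le> k \<Longrightarrow> finite (window b k m)"
  using finite_subset[OF window_subset] by blast

lemma card_window:
  assumes "1 < b" "1 \<le> k"
  shows "real (card (window b k m)) \<le> log b (real k) + 1"
proof (cases "window b k m = {}")
  case True
  then show ?thesis
    using assms by simp
next
  case False
  then obtain j where "b powr of_int j \<le> m"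
    by (auto simp: window_def)
  moreover have "0 < b powr of_int j"
    using assms by simp
  ultimately have "0 < m"
    by linarith
  let ?lo = "\<lceil>log b (m / real k)\<rceil>" and ?hi = "\<lfloor>log b m\<rfloor>"
  have "card (window b k m) \<le> card {?lo..?hi}"
    using window_subset[OF assms] by (intro card_mono) auto
  also have "\<dots> = nat (?hi + 1 - ?lo)"
    by simp
  finally have "real (card (window b k m)) \<le> real (nat (?hi + 1 - ?lo))"
    by linarith
  moreover have "real_of_int ?hi \<le> log b m" "log b (m / real k) \<le> real_of_int ?lo"
    by (rule of_int_floor_le, rule le_of_int_ceiling)
  moreover have "log b (m / real k) = log b m - log b (real k)"
    using \<open>0 < m\<close> assms by (simp add: log_divide)
  moreover have "0 \<le> log b (real k)"
    using assms by simp
  ultimately show ?thesis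
    by linarith
qed

lemma exists_powr_threshold:
  fixes b y :: real
  assumes "1 < b" "0 < y"
  obtains j :: int where "b powr of_int j \<le> y" "y < b * b powr of_int j"
proof
  let ?j = "\<lfloor>log b y\<rfloor>"
  show "b powr of_int ?j \<le> y"
    using assms by (simp add: powr_le_iff)
  have "log b y < of_int ?j + 1"
    by (rule real_of_int_floor_add_one_gt)
  then have "y < b powr (of_int ?j + 1)"
    using assms by (simp add: less_powr_iff)
  then show "y < b * b powr of_int ?j"
    using assms by (simp add: powr_add mult.commute)
qed

lemma exists_window_threshold:
  assumes "1 < b" "1 \<le> k" "1 \<le> R" "0 \<le> m" "R * b * m < v" "v \<le> real k * m"
  obtains j where "j \<in> window b k m" "R * (real k * b powr of_int j) \<le> v"
    "v < R * b * (real k * b powr of_int j)"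
proof -
  have "0 < v"
    using assms by (smt (verit) mult_nonneg_nonneg)
  then have "0 < v / (R * real k)"
    using assms by simp
  then obtain j where j: "b powr of_int j \<le> v / (R * real k)" "v / (R * real k) < b * b powr of_int j"
    using exists_powr_threshold[OF \<open>1 < b\<close>] by blast
  have Rk: "0 < R * real k"
    using assms by simp
  have lower: "R * (real k * b powr of_int j) \<le> v"
    using j(1) Rk by (simp add: field_simps)
  have upper: "v < R * b * (real k * b powr of_int j)"
    using j(2) Rk by (simp add: field_simps)
  have "b powr of_int j \<le> m"
  proof -
    have "v / (R * real k) \<le> real k * m / (1 * real k)"
      using assms Rk by (intro frac_le) auto
    then show ?thesis
      using j(1) assms by simp
  qed
  moreover have "m / real k \<le> b powr of_int j"
  proof -
    have "R * b * m < R * b * (real k * b powr of_int j)"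
      using assms(5) upper by linarith
    then have "m < real k * b powr of_int j"
      using assms by (simp add: mult_less_cancel_left_pos)
    then show ?thesis
      using assms by (simp add: divide_le_eq mult.commute)
  qed
  ultimately show ?thesis
    using that lower upper by (simp add: window_def)
qed

section \<open>Tagged memory\<close>

type_synonym tag = "int \<times> nat"

text \<open>An element tagged \<open>(j, i)\<close> with
  \<open>i < l\<close> lies in copy \<open>i\<close> of the threshold greedy with threshold \<open>b powr j\<close>; the element
  tagged \<open>(0, l)\<close> is one of largest singleton value seen so far.\<close>

definition tagged :: "('a \<times> tag) list \<Rightarrow> tag \<Rightarrow> 'a set" where
  "tagged P t = {y. (y, t) \<in> set P}"

definition keep_tag :: "real \<Rightarrow> nat \<Rightarrow> nat \<Rightarrow> real \<Rightarrow> bool \<Rightarrow> tag \<Rightarrow> bool" where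
  "keep_tag b k l m new t \<longleftrightarrow> (t = (0, l) \<and> \<not> new) \<or> (snd t < l \<and> fst t \<in> window b k m)"

definition new_tags :: "real \<Rightarrow> nat \<Rightarrow> nat \<Rightarrow> real \<Rightarrow> bool \<Rightarrow> (int \<Rightarrow> nat \<Rightarrow> bool) \<Rightarrow> tag list" where
  "new_tags b k l m new ok =
     filter (\<lambda>(j, i). find (ok j) [0..<l] = Some i)
       (List.product (sorted_list_of_set (window b k m)) [0..<l]) @ (if new then [(0, l)] else [])"

definition retag ::
    "real \<Rightarrow> nat \<Rightarrow> nat \<Rightarrow> real \<Rightarrow> bool \<Rightarrow> (int \<Rightarrow> nat \<Rightarrow> bool) \<Rightarrow> ('a \<times> tag) list \<Rightarrow> 'a
      \<Rightarrow> ('a \<times> tag) list" where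
  "retag b k l m new ok P x =
     filter (keep_tag b k l m new \<circ> snd) P @ map (Pair x) (new_tags b k l m new ok)"

definition tagged_step ::
    "nat \<Rightarrow> real \<Rightarrow> nat \<Rightarrow> ('a set \<Rightarrow> real) \<Rightarrow> ('a \<times> tag) list \<Rightarrow> 'a \<Rightarrow> ('a \<times> tag) list" where
  "tagged_step l b k f P x =
     (let m = max_singleton f (tagged P (0, l))
      in retag b k l (max m (f {x})) (m < f {x})
           (\<lambda>j i. fits f k (b powr of_int j) (tagged P (j, i)) x) P x)"

definition tagged_invariant ::
    "nat \<Rightarrow> real \<Rightarrow> nat \<Rightarrow> ('a set \<Rightarrow> real) \<Rightarrow> 'a list \<Rightarrow> ('a \<times> tag) list \<Rightarrow> bool" where
  "tagged_invariant l b k f p P \<longleftrightarrow>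
     distinct P \<and> fst ` set P \<subseteq> set p \<and>
     (\<forall>t \<in> snd ` set P. keep_tag b k l (max_singleton f (set p)) False t) \<and>
     (\<forall>j \<in> window b k (max_singleton f (set p)). \<forall>i < l.
        tagged P (j, i) = threshold_copies f k l (b powr of_int j) p i) \<and>
     card (tagged P (0, l)) \<le> 1 \<and> max_singleton f (tagged P (0, l)) = max_singleton f (set p)"

lemma finite_tagged [simp]: "finite (tagged P t)"
proof -
  have "tagged P t \<subseteq> fst ` set P"
    by (force simp: tagged_def)
  then show ?thesis
    using finite_subset by blast
qed

lemma set_new_tags:
  assumes "finite (window b k m)"
  shows "t \<in> set (new_tags b k l m new ok) \<longleftrightarrow>
           fst t \<in> window b k m \<and> find (ok (fst t)) [0..<l] = Some (snd t) \<or> new \<and> t = (0, l)"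
  using assms find_upt_Some_less by (cases t) (auto simp: new_tags_def)

lemma distinct_new_tags: "finite (window b k m) \<Longrightarrow> distinct (new_tags b k l m new ok)"
  by (auto simp: new_tags_def intro!: distinct_filter distinct_product dest: find_upt_Some_less)

lemma tagged_retag:
  "tagged (retag b k l m new ok P x) t =
     (if keep_tag b k l m new t then tagged P t else {}) \<union>
     (if t \<in> set (new_tags b k l m new ok) then {x} else {})"
  by (auto simp: retag_def tagged_def)

lemma distinct_retag:
  assumes "distinct P" "x \<notin> fst ` set P" "finite (window b k m)"
  shows "distinct (retag b k l m new ok P x)"
  unfolding retag_def distinct_append
proof (intro conjI)
  show "distinct (filter (keep_tag b k l m new \<circ> snd) P)"
    using assms(1) by simp
  show "distinct (map (Pair x) (new_tags b k l m new ok))"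
    using distinct_new_tags[OF assms(3)] by (simp add: distinct_map inj_on_def)
qed (use assms(2) in \<open>auto intro: rev_image_eqI\<close>)

lemma keep_tag_retag:
  assumes "finite (window b k m)" "t \<in> snd ` set (retag b k l m new ok P x)"
  shows "keep_tag b k l m False t"
  using assms set_new_tags[OF assms(1)]
  by (auto simp: retag_def keep_tag_def dest: find_upt_Some_less)

lemma tagged_invariant_Nil: "tagged_invariant l b k f [] []"
  by (simp add: tagged_invariant_def tagged_def)

lemma tagged_invariant_entering_threshold:
  assumes inv: "tagged_invariant l b k f p P" and "0 \<le> f {}"
    and j: "j \<in> window b k (max (f {x}) (max_singleton f (set p)))" and "i < l"
  shows "tagged P (j, i) = threshold_copies f k l (b powr of_int j) p i"
proof (cases "j \<in> window b k (max_singleton f (set p))")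
  case True
  then show ?thesis
    using inv \<open>i < l\<close> by (simp add: tagged_invariant_def)
next
  case False
  let ?m = "max_singleton f (set p)"
  have "max (f {x}) ?m / real k \<le> b powr of_int j"
    using j by (simp add: window_def)
  moreover have "?m / real k \<le> max (f {x}) ?m / real k"
    by (simp add: divide_right_mono)
  ultimately have below: "?m < b powr of_int j"
    using False by (auto simp: window_def)
  have "(j, i) \<notin> snd ` set P"
  proof
    assume "(j, i) \<in> snd ` set P"
    then have "keep_tag b k l ?m False (j, i)"
      using inv unfolding tagged_invariant_def by blast
    then show False
      using False \<open>i < l\<close> by (simp add: keep_tag_def)
  qed
  then have "tagged P (j, i) = {}"
    by (auto simp: tagged_def intro: rev_image_eqI)
  moreover have "\<forall>y\<in>set p. f {y} < b powr of_int j"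
    using max_singleton_ge[of "set p" _ f] below by (meson List.finite_set le_less_trans)
  then have "threshold_copies f k l (b powr of_int j) p i = {}"
    by (rule threshold_copies_below_threshold[of f, OF \<open>0 \<le> f {}\<close>])
  ultimately show ?thesis
    by simp
qed

lemma tagged_invariant_snoc:
  assumes inv: "tagged_invariant l b k f p P" and "x \<notin> set p" "0 \<le> f {}" "1 < b" "1 \<le> k"
  shows "tagged_invariant l b k f (p @ [x]) (tagged_step l b k f P x)"
proof -
  define m where "m = max_singleton f (set p)"
  define m' where "m' = max m (f {x})"
  define ok where "ok = (\<lambda>j i. fits f k (b powr of_int j) (tagged P (j, i)) x)"
  define P' where "P' = tagged_step l b k f P x"
  have m': "max_singleton f (set (p @ [x])) = m'"
    by (simp add: m_def m'_def max_singleton_insert max.commute)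
  have step: "P' = retag b k l m' (m < f {x}) ok P x"
    using inv by (simp add: P'_def tagged_step_def tagged_invariant_def m_def m'_def ok_def Let_def)
  have fin: "finite (window b k m')"
    using finite_window \<open>1 < b\<close> \<open>1 \<le> k\<close> by blast
  have "x \<notin> fst ` set P"
    using inv \<open>x \<notin> set p\<close> by (auto simp: tagged_invariant_def)
  moreover have "distinct P"
    using inv by (simp add: tagged_invariant_def)
  ultimately have "distinct P'"
    unfolding step by (intro distinct_retag fin)
  moreover have "fst ` set P' \<subseteq> set (p @ [x])"
    using inv by (auto simp: step retag_def tagged_invariant_def)
  moreover have "\<forall>t \<in> snd ` set P'. keep_tag b k l m' False t"
  proof
    fix t assume "t \<in> snd ` set P'"
    then show "keep_tag b k l m' False t"
      unfolding step by (rule keep_tag_retag[OF fin])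
  qed
  moreover have "tagged P' (j, i) = threshold_copies f k l (b powr of_int j) (p @ [x]) i"
    if "j \<in> window b k m'" "i < l" for j i
  proof -
    have current: "tagged P (j, i') = threshold_copies f k l (b powr of_int j) p i'" if "i' < l" for i'
      using tagged_invariant_entering_threshold[OF inv \<open>0 \<le> f {}\<close>] \<open>j \<in> window b k m'\<close> that
      by (simp add: m_def m'_def max.commute)
    have "find (ok j) [0..<l] =
          find (\<lambda>i'. fits f k (b powr of_int j) (threshold_copies f k l (b powr of_int j) p i') x) [0..<l]"
      using current by (intro find_cong) (auto simp: ok_def)
    then show ?thesis
      using set_new_tags[OF fin] that current[OF \<open>i < l\<close>]
      by (simp add: step tagged_retag keep_tag_def threshold_copies_snoc)
  qed
  moreover have "card (tagged P' (0, l)) \<le> 1 \<and> max_singleton f (tagged P' (0, l)) = m'"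
  proof -
    have "tagged P' (0, l) = (if m < f {x} then {x} else tagged P (0, l))"
      using set_new_tags[OF fin, of "(0, l)"]
      by (auto simp: step tagged_retag keep_tag_def dest: find_upt_Some_less)
    moreover have "0 \<le> m"
      unfolding m_def by (simp add: max_singleton_nonneg)
    ultimately show ?thesis
      using inv by (auto simp: tagged_invariant_def m'_def m_def max_singleton_insert)
  qed
  ultimately show ?thesis
    unfolding P'_def tagged_invariant_def m' by blast
qed

definition tagged_run :: "nat \<Rightarrow> real \<Rightarrow> nat \<Rightarrow> ('a set \<Rightarrow> real) \<Rightarrow> 'a list \<Rightarrow> ('a \<times> tag) list" where
  "tagged_run l b k f p = foldl (tagged_step l b k f) [] p"

lemma tagged_run_snoc: "tagged_run l b k f (p @ [x]) = tagged_step l b k f (tagged_run l b k f p) x"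
  by (simp add: tagged_run_def)

lemma tagged_invariant_tagged_run:
  assumes "distinct p" "0 \<le> f {}" "1 < b" "1 \<le> k"
  shows "tagged_invariant l b k f p (tagged_run l b k f p)"
  using assms(1)
proof (induction p rule: rev_induct)
  case Nil
  then show ?case
    by (simp add: tagged_run_def tagged_invariant_Nil)
next
  case (snoc x p)
  then have "distinct p" "x \<notin> set p"
    by auto
  then show ?case
    using tagged_invariant_snoc[OF snoc.IH \<open>x \<notin> set p\<close> assms(2-4)] by (simp add: tagged_run_snoc)
qed

lemma card_set_le_sum_card_tagged:
  assumes "finite A" "snd ` set P \<subseteq> A"
  shows "card (set P) \<le> (\<Sum>t\<in>A. card (tagged P t))"
proof -
  have "set P \<subseteq> (\<Union>t\<in>A. (\<lambda>y. (y, t)) ` tagged P t)"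
    using assms(2) by (force simp: tagged_def)
  then have "card (set P) \<le> card (\<Union>t\<in>A. (\<lambda>y. (y, t)) ` tagged P t)"
    using assms(1) by (intro card_mono) auto
  also have "\<dots> \<le> (\<Sum>t\<in>A. card ((\<lambda>y. (y, t)) ` tagged P t))"
    using assms(1) by (rule card_UN_le)
  also have "\<dots> \<le> (\<Sum>t\<in>A. card (tagged P t))"
    by (intro sum_mono card_image_le) simp
  finally show ?thesis .
qed

lemma length_le_if_tagged_invariant:
  assumes inv: "tagged_invariant l b k f p P" and "1 < b" "1 \<le> k"
  shows "length P \<le> k * (card (window b k (max_singleton f (set p))) * l + 1)"
proof -
  let ?W = "window b k (max_singleton f (set p))"
  let ?tags = "?W \<times> {..<l} \<union> {(0, l)}"
  have fin: "finite ?tags"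
    using finite_window[OF assms(2,3)] by simp
  have "snd ` set P \<subseteq> ?tags"
    using inv unfolding tagged_invariant_def keep_tag_def by force
  moreover have "length P = card (set P)"
    using inv by (simp add: tagged_invariant_def distinct_card)
  ultimately have "length P \<le> (\<Sum>t\<in>?tags. card (tagged P t))"
    using card_set_le_sum_card_tagged[OF fin] by simp
  also have "\<dots> \<le> (\<Sum>t\<in>?tags. k)"
  proof (rule sum_mono)
    fix t assume t: "t \<in> ?tags"
    show "card (tagged P t) \<le> k"
    proof (cases "t = (0, l)")
      case True
      then show ?thesis
        using inv \<open>1 \<le> k\<close> by (simp add: tagged_invariant_def)
    next
      case False
      then obtain j i where "t = (j, i)" "j \<in> ?W" "i < l"
        using t by auto
      then show ?thesis
        using inv card_threshold_copies by (simp add: tagged_invariant_def)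
    qed
  qed
  also have "\<dots> = card ?tags * k"
    by simp
  also have "card ?tags \<le> card ?W * l + 1"
    using card_Un_le[of "?W \<times> {..<l}" "{(0, l)}"] by (simp add: card_cartesian_product)
  finally show ?thesis
    by (simp add: mult.commute)
qed

lemma tagged_invariant_best_singleton:
  assumes inv: "tagged_invariant l b k f p P" and "0 \<le> f {}" "1 \<le> k"
  obtains B where "B \<subseteq> fst ` set P" "card B \<le> k" "max_singleton f (set p) \<le> f B"
proof (cases "max_singleton f (set p) = 0")
  case True
  then show ?thesis
    using that[of "{}"] \<open>0 \<le> f {}\<close> by simp
next
  case False
  then have "0 < max_singleton f (tagged P (0, l))"
    using inv max_singleton_nonneg[of "set p" f] by (simp add: tagged_invariant_def)
  then obtain y where "y \<in> tagged P (0, l)" "f {y} = max_singleton f (tagged P (0, l))"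
    by (rule max_singleton_attained[OF finite_tagged])
  moreover from this(1) have "y \<in> fst ` set P"
    by (auto simp: tagged_def intro: rev_image_eqI)
  ultimately show ?thesis
    using that[of "{y}"] inv \<open>1 \<le> k\<close> by (simp add: tagged_invariant_def)
qed

lemma tagged_invariant_window_copies:
  assumes "tagged_invariant l b k f p P" "j \<in> window b k (max_singleton f (set p))"
  shows "(\<Union>i<l. threshold_copies f k l (b powr of_int j) p i) \<subseteq> fst ` set P"
proof (rule UN_least)
  fix i assume "i \<in> {..<l}"
  then have "threshold_copies f k l (b powr of_int j) p i = tagged P (j, i)"
    using assms by (simp add: tagged_invariant_def)
  then show "threshold_copies f k l (b powr of_int j) p i \<subseteq> fst ` set P"
    by (auto simp: tagged_def intro: rev_image_eqI)
qed

lemma tagged_invariant_large_value: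
  assumes sm: "nonneg_submodular_on (set p) f" and "distinct p"
    and inv: "tagged_invariant l b k f p P" and "1 < b" "1 \<le> k" "2 \<le> l"
    and c: "(3 * real l - 1) / (real l - 1) * b \<le> c" and T: "T \<subseteq> set p" "card T \<le> k" "T \<noteq> {}"
    and large: "c * max_singleton f (set p) < f T"
  shows "\<exists>B \<subseteq> fst ` set P. card B \<le> k \<and> f T \<le> c * f B"
proof -
  let ?m = "max_singleton f (set p)" and ?R = "(3 * real l - 1) / (real l - 1)"
  have R: "1 \<le> ?R"
    using \<open>2 \<le> l\<close> by (simp add: field_simps)
  have m0: "0 \<le> ?m"
    by (simp add: max_singleton_nonneg)
  have "f T \<le> real (card T) * ?m"
    using submodular_le_card_mult_max_singleton[OF sm _ _ T(1,3)] by simp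
  also have "\<dots> \<le> real k * ?m"
    using T(2) m0 by (intro mult_right_mono) auto
  finally have upper: "f T \<le> real k * ?m" .
  have lower: "?R * b * ?m < f T"
    using large mult_right_mono[OF c m0] by linarith
  obtain j where j: "j \<in> window b k ?m" "?R * (real k * b powr of_int j) \<le> f T"
    "f T < ?R * b * (real k * b powr of_int j)"
    by (rule exists_window_threshold[OF \<open>1 < b\<close> \<open>1 \<le> k\<close> R m0 lower upper])
  let ?t = "b powr of_int j"
  have "(3 * real l - 1) * (real k * ?t) \<le> (real l - 1) * f T"
    using j(2) \<open>2 \<le> l\<close> by (simp add: field_simps)
  moreover have "1 \<le> l" "0 \<le> ?t"
    using \<open>2 \<le> l\<close> by auto
  ultimately obtain B where B: "B \<subseteq> (\<Union>i<l. threshold_copies f k l ?t p i)" "card B \<le> k"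
    "real k * ?t \<le> f B"
    using threshold_copies_large_subset[OF sm \<open>distinct p\<close> subset_refl T(1,2)] by blast
  have "0 \<le> ?R * b"
    using R \<open>1 < b\<close> by (intro mult_nonneg_nonneg) auto
  then have "?R * b * (real k * ?t) \<le> ?R * b * f B"
    by (rule mult_left_mono[OF B(3)])
  then have "f T \<le> ?R * b * f B"
    using j(3) by linarith
  also have "\<dots> \<le> c * f B"
  proof (rule mult_right_mono[OF c])
    have "0 \<le> real k * ?t"
      by simp
    then show "0 \<le> f B"
      using B(3) by linarith
  qed
  finally have "f T \<le> c * f B" .
  moreover have "B \<subseteq> fst ` set P"
    using B(1) tagged_invariant_window_copies[OF inv j(1)] by (rule order_trans)
  ultimately show ?thesis
    using B(2) by blast
qed

lemma tagged_invariant_approx: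
  assumes sm: "nonneg_submodular_on (set p) f" and "distinct p"
    and inv: "tagged_invariant l b k f p P" and "1 < b" "1 \<le> k" "2 \<le> l"
    and c: "(3 * real l - 1) / (real l - 1) * b \<le> c" and T: "T \<subseteq> set p" "card T \<le> k"
  shows "\<exists>B \<subseteq> fst ` set P. card B \<le> k \<and> f T \<le> c * f B"
proof -
  let ?m = "max_singleton f (set p)"
  have "1 * 1 \<le> (3 * real l - 1) / (real l - 1) * b"
    using \<open>2 \<le> l\<close> \<open>1 < b\<close> by (intro mult_mono) (auto simp: field_simps)
  then have "1 \<le> c"
    using c by linarith
  have f0: "0 \<le> f {}"
    using nonneg_submodular_on_nonneg[OF sm] by simp
  consider "T = {}" | "f T \<le> c * ?m" | "T \<noteq> {}" "c * ?m < f T"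
    by linarith
  then show ?thesis
  proof cases
    case 1
    then show ?thesis
      using mult_right_mono[OF \<open>1 \<le> c\<close> f0] by (intro exI[of _ "{}"]) auto
  next
    case 2
    obtain B where B: "B \<subseteq> fst ` set P" "card B \<le> k" "?m \<le> f B"
      using tagged_invariant_best_singleton[OF inv f0 \<open>1 \<le> k\<close>] .
    have "c * ?m \<le> c * f B"
      using B(3) \<open>1 \<le> c\<close> by (intro mult_left_mono) auto
    then have "f T \<le> c * f B"
      using 2 by linarith
    then show ?thesis
      using B(1,2) by blast
  next
    case 3
    then show ?thesis
      by (rule tagged_invariant_large_value[OF assms])
  qed
qed
section \<open>The streaming algorithm\<close>

definition run_step ::
    "(view \<Rightarrow> nat \<Rightarrow> real list \<Rightarrow> nat list \<times> real list) \<Rightarrow> ('a set \<Rightarrow> real)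
      \<Rightarrow> 'a list \<times> real list \<Rightarrow> 'a \<Rightarrow> 'a list \<times> real list" where
  "run_step stp f s x = (case s of (M, a) \<Rightarrow>
     (case stp (view_of f (M @ [x])) (length (M @ [x])) a of (is, a') \<Rightarrow> (select (M @ [x]) is, a')))"

lemma run_from_return_pmf:
  assumes "\<And>g n a. st k g n a = return_pmf (stp g n a)"
  shows "run_from st k f s xs = return_pmf (foldl (run_step stp f) s xs)"
proof (induction xs arbitrary: s)
  case Nil
  then show ?case
    by (cases s) simp
next
  case (Cons x xs)
  then show ?case
    by (cases s, cases "stp (view_of f (fst s @ [x])) (Suc (length (fst s))) (snd s)")
      (simp add: assms run_step_def bind_return_pmf)
qed

definition encode_tag :: "nat \<Rightarrow> tag \<Rightarrow> real" where
  "encode_tag l t = of_int (fst t * int (Suc l) + int (snd t))"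

definition decode_tag :: "nat \<Rightarrow> real \<Rightarrow> tag" where
  "decode_tag l r = (\<lfloor>r\<rfloor> div int (Suc l), nat (\<lfloor>r\<rfloor> mod int (Suc l)))"

lemma decode_encode_tag:
  assumes "snd t \<le> l"
  shows "decode_tag l (encode_tag l t) = t"
proof (cases t)
  case (Pair j i)
  have "\<lfloor>encode_tag l t\<rfloor> = j * int (Suc l) + int i"
    unfolding encode_tag_def Pair floor_of_int by simp
  moreover have "int i < int (Suc l)"
    using assms Pair by simp
  ultimately show ?thesis
    using Pair by (simp add: decode_tag_def)
qed

text \<open>The algorithm sees the stored elements only as positions \<open>0..<x\<close> of the view, the arriving
  element being position \<open>x\<close>, and recovers their tags from the auxiliary words.\<close>

definition positions :: "tag list \<Rightarrow> nat \<Rightarrow> tag \<Rightarrow> nat set" where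
  "positions ts x t = {q. q < x \<and> ts ! q = t}"

definition view_step :: "nat \<Rightarrow> real \<Rightarrow> nat \<Rightarrow> view \<Rightarrow> nat \<Rightarrow> real list \<Rightarrow> nat list \<times> real list" where
  "view_step l b k g n a =
     (let ts = map (decode_tag l) a; x = n - 1; S = positions ts x;
          m = max_singleton g (S (0, l)); new = m < g {x}; m' = max m (g {x});
          old = filter (\<lambda>q. keep_tag b k l m' new (ts ! q)) [0..<x];
          nt = new_tags b k l m' new (\<lambda>j i. fits g k (b powr of_int j) (S (j, i)) x)
      in (old @ replicate (length nt) x, map (encode_tag l) (map ((!) ts) old @ nt)))"

definition memory_of :: "nat \<Rightarrow> ('a \<times> tag) list \<Rightarrow> 'a list \<times> real list" where
  "memory_of l P = (map fst P, map (encode_tag l \<circ> snd) P)"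

lemma filter_eq_map_nth: "filter Q xs = map ((!) xs) (filter (\<lambda>q. Q (xs ! q)) [0..<length xs])"
proof -
  have "filter Q xs = filter Q (map ((!) xs) [0..<length xs])"
    by (simp add: map_nth)
  then show ?thesis
    by (simp add: filter_map comp_def)
qed

lemma view_of_snoc:
  assumes "I \<subseteq> {..<length M}"
  shows "view_of f (M @ [x]) I = f ((!) M ` I)"
    and "view_of f (M @ [x]) (insert (length M) I) = f (insert x ((!) M ` I))"
proof -
  have "(!) (M @ [x]) ` I = (!) M ` I"
    using assms by (intro image_cong) (auto simp: nth_append)
  moreover have "I \<inter> {..<length (M @ [x])} = I" "insert (length M) I \<inter> {..<length (M @ [x])} = insert (length M) I"
    using assms by auto
  ultimately show "view_of f (M @ [x]) I = f ((!) M ` I)"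
    "view_of f (M @ [x]) (insert (length M) I) = f (insert x ((!) M ` I))"
    unfolding view_of_def by (simp_all add: nth_append)
qed

lemma image_positions: "(!) (map fst P) ` positions (map snd P) (length P) t = tagged P t"
  by (force simp: positions_def tagged_def in_set_conv_nth)

lemma card_positions:
  assumes "distinct P"
  shows "card (positions (map snd P) (length P) t) = card (tagged P t)"
proof -
  have "inj_on ((!) (map fst P)) (positions (map snd P) (length P) t)"
  proof (rule inj_onI)
    fix q q' assume q: "q \<in> positions (map snd P) (length P) t" "q' \<in> positions (map snd P) (length P) t"
      and "map fst P ! q = map fst P ! q'"
    moreover have "snd (P ! q) = snd (P ! q')"
      using q by (auto simp: positions_def)
    ultimately have "P ! q = P ! q'"
      using q by (simp add: prod_eqI positions_def)
    then show "q = q'"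
      using q assms by (simp add: positions_def nth_eq_iff_index_eq)
  qed
  then show ?thesis
    by (metis card_image image_positions)
qed

lemma view_of_tagged:
  fixes P :: "('a \<times> tag) list" and f :: "'a set \<Rightarrow> real" and x :: 'a
  defines "g \<equiv> view_of f (map fst P @ [x])" and "S \<equiv> positions (map snd P) (length P)"
  assumes "distinct P"
  shows "g {length P} = f {x}"
    and "max_singleton g (S t) = max_singleton f (tagged P t)"
    and "fits g k \<tau> (S t) (length P) = fits f k \<tau> (tagged P t) x"
proof -
  have S: "S t \<subseteq> {..<length (map fst P)}" for t
    by (auto simp: S_def positions_def)
  note g = view_of_snoc[OF S, of f x, folded g_def]
  show "g {length P} = f {x}"
    using view_of_snoc(2)[of "{}" "map fst P" f x] by (simp add: g_def)
  have "(\<lambda>q. g {q}) ` S t = (\<lambda>y. f {y}) ` tagged P t"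
    using view_of_snoc(1)[of "{_}" "map fst P" f x] S[of t]
    unfolding image_positions[symmetric] g_def S_def by (force simp: image_image)
  then show "max_singleton g (S t) = max_singleton f (tagged P t)"
    by (simp add: max_singleton_def)
  show "fits g k \<tau> (S t) (length P) = fits f k \<tau> (tagged P t) x"
    using g card_positions[OF assms(3)] by (simp add: fits_def S_def image_positions)
qed

lemma select_append_replicate:
  assumes "\<forall>q \<in> set qs. q < length M"
  shows "select (M @ [x]) (qs @ replicate r (length M)) = map ((!) M) qs @ replicate r x"
proof -
  have "filter (\<lambda>i. i < length (M @ [x])) (qs @ replicate r (length M)) = qs @ replicate r (length M)"
    using assms by (intro filter_True) auto
  moreover have "map ((!) (M @ [x])) qs = map ((!) M) qs"
    using assms by (auto simp: nth_append)
  ultimately show ?thesis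
    by (simp add: select_def)
qed

lemma run_step_view_step:
  assumes "distinct P" "\<forall>t \<in> snd ` set P. snd t \<le> l"
  shows "run_step (view_step l b k) f (memory_of l P) x = memory_of l (tagged_step l b k f P x)"
proof -
  define ts where "ts = map snd P"
  define n where "n = length P"
  define g where "g = view_of f (map fst P @ [x])"
  define S where "S = positions ts n"
  define m where "m = max_singleton f (tagged P (0, l))"
  define nt where "nt = new_tags b k l (max m (f {x})) (m < f {x})
                          (\<lambda>j i. fits f k (b powr of_int j) (tagged P (j, i)) x)"
  define old where "old = filter (\<lambda>q. keep_tag b k l (max m (f {x})) (m < f {x}) (ts ! q)) [0..<n]"
  note view = view_of_tagged[OF assms(1), of f x, folded g_def ts_def n_def, folded S_def]
  have decode: "map (decode_tag l) (map (encode_tag l \<circ> snd) P) = ts"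
    using assms(2) by (auto simp: ts_def decode_encode_tag intro: map_idI)
  have len: "length (map fst P @ [x]) - 1 = n"
    by (simp add: n_def)
  have "view_step l b k g (length (map fst P @ [x])) (map (encode_tag l \<circ> snd) P) =
      (old @ replicate (length nt) n, map (encode_tag l) (map ((!) ts) old @ nt))"
    unfolding view_step_def decode Let_def len S_def[symmetric] view
    by (simp add: m_def nt_def old_def)
  moreover have "select (map fst P @ [x]) (old @ replicate (length nt) n) =
      map fst (map ((!) P) old) @ replicate (length nt) x"
    using select_append_replicate[of old "map fst P"] by (auto simp: old_def n_def)
  moreover have "filter (keep_tag b k l (max m (f {x})) (m < f {x}) \<circ> snd) P = map ((!) P) old"
    unfolding filter_eq_map_nth[of _ P] old_def
    by (intro arg_cong[where f = "map ((!) P)"] filter_cong) (auto simp: ts_def n_def)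
  moreover have "map ((!) ts) old = map snd (map ((!) P) old)"
    by (auto simp: old_def ts_def n_def)
  ultimately show ?thesis
    by (simp add: run_step_def memory_of_def g_def tagged_step_def retag_def Let_def m_def nt_def
        map_replicate_const comp_def)
qed

lemma tag_bound_if_tagged_invariant:
  "tagged_invariant l b k f p P \<Longrightarrow> \<forall>t \<in> snd ` set P. snd t \<le> l"
  unfolding tagged_invariant_def keep_tag_def by auto

lemma run_view_step:
  assumes "distinct p" "0 \<le> f {}" "1 < b" "1 \<le> k"
  shows "run (\<lambda>k g n a. return_pmf (view_step l b k g n a)) k f p =
           return_pmf (memory_of l (tagged_run l b k f p))"
proof -
  have "foldl (run_step (view_step l b k) f) ([], []) p = memory_of l (tagged_run l b k f p)"
    using assms(1)
  proof (induction p rule: rev_induct)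
    case Nil
    then show ?case
      by (simp add: tagged_run_def memory_of_def)
  next
    case (snoc x p)
    then have inv: "tagged_invariant l b k f p (tagged_run l b k f p)"
      using tagged_invariant_tagged_run assms(2-4) by auto
    have "foldl (run_step (view_step l b k) f) ([], []) (p @ [x]) =
        run_step (view_step l b k) f (memory_of l (tagged_run l b k f p)) x"
      using snoc by simp
    also have "\<dots> = memory_of l (tagged_run l b k f (p @ [x]))"
    proof -
      have "distinct (tagged_run l b k f p)"
        using inv by (simp add: tagged_invariant_def)
      then show ?thesis
        using run_step_view_step tag_bound_if_tagged_invariant[OF inv] by (simp add: tagged_run_snoc)
    qed
    finally show ?case .
  qed
  then show ?thesis
    unfolding run_def by (simp add: run_from_return_pmf)
qed

definition best_indices :: "nat \<Rightarrow> view \<Rightarrow> nat \<Rightarrow> nat set" where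
  "best_indices k g n = arg_max_on g {I. I \<subseteq> {..<n} \<and> card I \<le> k}"

lemma best_indices_maximal:
  "best_indices k g n \<subseteq> {..<n} \<and> card (best_indices k g n) \<le> k \<and>
     (\<forall>J. J \<subseteq> {..<n} \<longrightarrow> card J \<le> k \<longrightarrow> g J \<le> g (best_indices k g n))"
proof -
  let ?C = "{I. I \<subseteq> {..<n} \<and> card I \<le> k}"
  have "finite ?C"
    by (rule finite_subset[of _ "Pow {..<n}"]) auto
  moreover have "{} \<in> ?C"
    by simp
  ultimately obtain I0 where "I0 \<in> ?C" "g I0 = Max (g ` ?C)"
    using Max_in[of "g ` ?C"] by fastforce
  with \<open>finite ?C\<close> have "I0 \<in> ?C" "\<And>J. J \<in> ?C \<Longrightarrow> \<not> g J > g I0"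
    by (auto simp: not_less)
  then show ?thesis
    unfolding best_indices_def arg_max_on_def by (rule arg_maxI) (auto simp: not_less)
qed

definition offline_best :: finfn where
  "offline_best = (\<lambda>k g n a. return_pmf (best_indices k g n))"

definition best_subset :: "nat \<Rightarrow> ('a set \<Rightarrow> real) \<Rightarrow> 'a list \<Rightarrow> 'a set" where
  "best_subset k f M = (!) M ` best_indices k (view_of f M) (length M)"

lemma stream_output_offline_best:
  "stream_output st offline_best k f xs = map_pmf (\<lambda>s. best_subset k f (fst s)) (run st k f xs)"
proof -
  have "(!) M ` (best_indices k (view_of f M) (length M) \<inter> {..<length M}) = best_subset k f M" for M :: "'a list"
    using best_indices_maximal[of k "view_of f M" "length M"] by (simp add: best_subset_def Int_absorb2)
  then show ?thesis
    unfolding stream_output_def offline_best_def map_pmf_def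
    by (intro bind_pmf_cong refl) (simp add: bind_return_pmf split: prod.split)
qed

lemma card_best_subset: "card (best_subset k f M) \<le> k"
proof -
  let ?I = "best_indices k (view_of f M) (length M)"
  have "finite ?I"
    using best_indices_maximal[of k "view_of f M" "length M"] finite_subset by blast
  then have "card (best_subset k f M) \<le> card ?I"
    unfolding best_subset_def by (rule card_image_le)
  then show ?thesis
    using best_indices_maximal[of k "view_of f M" "length M"] by linarith
qed

lemma best_subset_max:
  assumes "B \<subseteq> set M" "card B \<le> k"
  shows "f B \<le> f (best_subset k f M)"
proof -
  define h where "h y = (SOME q. q < length M \<and> M ! q = y)" for y
  have h: "h y < length M \<and> M ! h y = y" if "y \<in> set M" for y
    unfolding h_def by (rule someI_ex) (use that in \<open>simp add: in_set_conv_nth\<close>)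
  let ?J = "h ` B"
  have finB: "finite B"
    using assms(1) finite_subset by blast
  have J: "?J \<subseteq> {..<length M}" "card ?J \<le> k"
    using h assms card_image_le[OF finB, of h] by auto
  have "(!) M ` (?J \<inter> {..<length M}) = B"
    using h assms(1) J(1) by (force simp: image_image Int_absorb2)
  then have "f B = view_of f M ?J"
    by (simp add: view_of_def)
  also have "\<dots> \<le> view_of f M (best_indices k (view_of f M) (length M))"
    using best_indices_maximal[of k "view_of f M" "length M"] J by blast
  also have "\<dots> = f (best_subset k f M)"
    using best_indices_maximal[of k "view_of f M" "length M"] by (simp add: view_of_def best_subset_def Int_absorb2)
  finally show ?thesis .
qed

section \<open>Choice of parameters\<close>

definition num_copies :: "real \<Rightarrow> nat" where
  "num_copies e = nat \<lceil>4 / e\<rceil> + 1"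

definition threshold_base :: "real \<Rightarrow> real" where
  "threshold_base e = 1 + e / 8"

lemma num_copies_bounds:
  assumes "0 < e" "e \<le> 1"
  shows "4 / e \<le> real (num_copies e) - 1" "real (num_copies e) \<le> 6 / e"
proof -
  have "4 \<le> 4 / e"
    using assms by (simp add: field_simps)
  then have "real (num_copies e) - 1 = of_int \<lceil>4 / e\<rceil>"
    by (simp add: num_copies_def)
  moreover have "2 \<le> 2 / e"
    using assms by (simp add: field_simps)
  ultimately show "4 / e \<le> real (num_copies e) - 1" "real (num_copies e) \<le> 6 / e"
    using le_of_int_ceiling[of "4 / e"] of_int_ceiling_le_add_one[of "4 / e"] by linarith+
qed

lemma approximation_parameters:
  assumes "0 < e" "e \<le> 1"
  shows "2 \<le> num_copies e" "1 < threshold_base e"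
    "(3 * real (num_copies e) - 1) / (real (num_copies e) - 1) * threshold_base e \<le> 3 + e"
proof -
  let ?l = "real (num_copies e)"
  have l: "4 / e \<le> ?l - 1"
    using num_copies_bounds[OF assms] by simp
  moreover have "4 \<le> 4 / e"
    using assms by (simp add: field_simps)
  ultimately show "2 \<le> num_copies e"
    by linarith
  show "1 < threshold_base e"
    using assms by (simp add: threshold_base_def)
  have "(3 * ?l - 1) / (?l - 1) = 3 + 2 / (?l - 1)"
    using l \<open>4 \<le> 4 / e\<close> by (simp add: field_simps)
  moreover have "2 / (?l - 1) \<le> 2 / (4 / e)"
  proof (rule divide_left_mono[OF l])
    have "0 < 4 / e"
      using assms by simp
    then show "0 < (?l - 1) * (4 / e)"
      using l by (intro mult_pos_pos) linarith+
  qed simp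
  ultimately have "(3 * ?l - 1) / (?l - 1) \<le> 3 + e / 2"
    by simp
  then have "(3 * ?l - 1) / (?l - 1) * threshold_base e \<le> (3 + e / 2) * (1 + e / 8)"
    unfolding threshold_base_def using assms by (intro mult_right_mono) auto
  also have "\<dots> \<le> 3 + e"
  proof -
    have "e * e \<le> e"
      using assms by (simp add: mult_left_le_one_le)
    moreover have "(3 + e / 2) * (1 + e / 8) = 3 + 7 / 8 * e + e * e / 16"
      by (simp add: algebra_simps)
    ultimately show ?thesis
      using assms by linarith
  qed
  finally show "(3 * ?l - 1) / (?l - 1) * threshold_base e \<le> 3 + e" .
qed

lemma ln_threshold_base_ge:
  assumes "0 < e" "e \<le> 1"
  shows "e / 10 \<le> ln (threshold_base e)"
proof -
  have "e / 8 - (e / 8)\<^sup>2 \<le> ln (threshold_base e)"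
    using assms by (simp add: threshold_base_def ln_one_plus_pos_lower_bound)
  moreover have "(e / 8)\<^sup>2 \<le> e / 64"
    using assms mult_left_le_one_le[of e e] by (simp add: power2_eq_square)
  ultimately show ?thesis
    using assms by linarith
qed

lemma memory_parameters:
  assumes "0 < e" "e \<le> 1" "1 \<le> k"
  shows "real k * (real (card (window (threshold_base e) k m)) * real (num_copies e) + 1)
           \<le> 100 * real k * (1 + ln (real k)) / e ^ 2"
proof -
  let ?b = "threshold_base e" and ?K = "ln (real k)"
  have K: "0 \<le> ?K"
    using assms by simp
  have lnb: "e / 10 \<le> ln ?b"
    using ln_threshold_base_ge[OF assms(1,2)] .
  have "log ?b (real k) = ?K / ln ?b"
    by (simp add: log_def)
  also have "\<dots> \<le> ?K / (e / 10)"
    using lnb K assms by (intro divide_left_mono) auto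
  also have "\<dots> = 10 * ?K / e"
    by simp
  finally have "real (card (window ?b k m)) \<le> 10 * ?K / e + 1"
    using card_window[of ?b k m] approximation_parameters(2)[OF assms(1,2)] assms(3) by linarith
  also have "\<dots> \<le> 10 * (1 + ?K) / e"
    using assms by (simp add: field_simps)
  finally have W: "real (card (window ?b k m)) \<le> 10 * (1 + ?K) / e" .
  have "real (card (window ?b k m)) * real (num_copies e) \<le> 10 * (1 + ?K) / e * (6 / e)"
    using W num_copies_bounds(2)[OF assms(1,2)] by (intro mult_mono) auto
  moreover have "1 \<le> (1 + ?K) / e ^ 2"
  proof -
    have "e ^ 2 \<le> 1 + ?K"
      using K assms power_le_one[of e 2] by linarith
    then show ?thesis
      using assms by simp
  qed
  moreover have "10 * (1 + ?K) / e * (6 / e) = 60 * ((1 + ?K) / e ^ 2)"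
    by (simp add: power2_eq_square)
  ultimately have "real (card (window ?b k m)) * real (num_copies e) + 1 \<le> 100 * ((1 + ?K) / e ^ 2)"
    by linarith
  then have "real k * (real (card (window ?b k m)) * real (num_copies e) + 1)
      \<le> real k * (100 * ((1 + ?K) / e ^ 2))"
    by (rule mult_left_mono) simp
  also have "\<dots> = 100 * real k * (1 + ?K) / e ^ 2"
    by simp
  finally show ?thesis .
qed

definition threshold_streaming :: "real \<Rightarrow> stepfn" where
  "threshold_streaming e =
     (\<lambda>k g n a. return_pmf (view_step (num_copies e) (threshold_base e) k g n a))"

lemma run_threshold_streaming:
  assumes "0 < e" "e \<le> 1" "distinct p" "0 \<le> f {}" "1 \<le> k"
  shows "run (threshold_streaming e) k f p =
           return_pmf (memory_of (num_copies e) (tagged_run (num_copies e) (threshold_base e) k f p))"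
  unfolding threshold_streaming_def
  using run_view_step[where f = f, OF assms(3,4) approximation_parameters(2)[OF assms(1,2)] assms(5)] .

lemma threshold_streaming_memory:
  assumes "0 < e" "e \<le> 1" "distinct p" "0 \<le> f {}" "1 \<le> k"
    and "(M, a) \<in> set_pmf (run (threshold_streaming e) k f p)"
  shows "length a = length M" "real (length M) \<le> 100 * real k * (1 + ln (real k)) / e ^ 2"
proof -
  let ?l = "num_copies e" and ?b = "threshold_base e"
  let ?P = "tagged_run ?l ?b k f p"
  have M: "(M, a) = memory_of ?l ?P"
    using assms(6) run_threshold_streaming[where f = f, OF assms(1-5)] by simp
  then show "length a = length M"
    by (simp add: memory_of_def)
  have "length M \<le> k * (card (window ?b k (max_singleton f (set p))) * ?l + 1)"
    using M length_le_if_tagged_invariant[OF tagged_invariant_tagged_run[where f = f, OF assms(3,4) _ assms(5)]]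
      approximation_parameters(2)[OF assms(1,2)] assms(5) by (simp add: memory_of_def)
  then have "real (length M) \<le> real (k * (card (window ?b k (max_singleton f (set p))) * ?l + 1))"
    by (simp only: of_nat_le_iff)
  also have "\<dots> = real k * (real (card (window ?b k (max_singleton f (set p)))) * real ?l + 1)"
    by (simp add: algebra_simps)
  also have "\<dots> \<le> 100 * real k * (1 + ln (real k)) / e ^ 2"
    by (rule memory_parameters[OF assms(1,2,5)])
  finally show "real (length M) \<le> 100 * real k * (1 + ln (real k)) / e ^ 2" .
qed

lemma threshold_streaming_approx:
  assumes "0 < e" "e \<le> 1" "distinct xs" "nonneg_submodular_on (set xs) f" "1 \<le> k"
    and "T \<subseteq> set xs" "card T \<le> k"
  shows "f T / (3 + e) \<le> measure_pmf.expectation (stream_output (threshold_streaming e) offline_best k f xs) f"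
proof -
  let ?l = "num_copies e" and ?b = "threshold_base e"
  let ?P = "tagged_run ?l ?b k f xs"
  have f0: "0 \<le> f {}"
    using nonneg_submodular_on_nonneg[OF assms(4)] by simp
  have out: "stream_output (threshold_streaming e) offline_best k f xs =
      return_pmf (best_subset k f (map fst ?P))"
    using run_threshold_streaming[where f = f, OF assms(1-3) f0 assms(5)]
    by (simp add: stream_output_offline_best memory_of_def)
  obtain B where B: "B \<subseteq> fst ` set ?P" "card B \<le> k" "f T \<le> (3 + e) * f B"
    using tagged_invariant_approx[OF assms(4,3) tagged_invariant_tagged_run[where f = f, OF assms(3) f0 _ assms(5)]
        _ assms(5) _ _ assms(6,7)] approximation_parameters[OF assms(1,2)] by blast
  have "f T \<le> (3 + e) * f (best_subset k f (map fst ?P))"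
    using B best_subset_max[of B "map fst ?P" k f] assms(1) by (smt (verit) mult_left_mono set_map)
  then show ?thesis
    using assms(1) by (simp add: out divide_le_eq mult.commute)
qed

lemma le_mult_power_log:
  fixes D x :: real and k n :: nat
  assumes "0 < D" "1 \<le> k" "x \<le> D * real k * (1 + ln (real k))"
  shows "x \<le> D * real k * (1 + ln (real k) + ln (real n)) ^ nat \<lceil>D\<rceil>"
proof -
  have "0 \<le> ln (real n)"
    by (cases n) simp_all
  moreover have "0 \<le> ln (real k)"
    using assms(2) by simp
  ultimately have "1 + ln (real k) \<le> (1 + ln (real k) + ln (real n)) ^ nat \<lceil>D\<rceil>"
    using assms(1) self_le_power[of "1 + ln (real k) + ln (real n)" "nat \<lceil>D\<rceil>"] by simp
  then show ?thesis
    using assms mult_left_mono[of _ _ "D * real k"] by (smt (verit) mult_nonneg_nonneg of_nat_0_le_iff)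
qed

lemma threshold_streaming_guarantees:
  assumes "0 < e" "e \<le> 1" "distinct xs" "1 \<le> k" "nonneg_submodular_on (set xs) f"
  shows "\<forall>j \<le> length xs. \<forall>(M, a) \<in> set_pmf (run (threshold_streaming e) k f (take j xs)).
           real (length M) \<le> 100 * real k * (1 + ln (real k)) / e ^ 2 \<and>
           real (length a) \<le> 100 / e ^ 2 * real k * (1 + ln (real k) + ln (real (length xs))) ^ nat \<lceil>100 / e ^ 2\<rceil>"
    and "\<forall>S \<in> set_pmf (stream_output (threshold_streaming e) offline_best k f xs). card S \<le> k"
    and "\<forall>T. T \<subseteq> set xs \<and> card T \<le> k \<longrightarrow>
           f T / (3 + e) \<le> measure_pmf.expectation (stream_output (threshold_streaming e) offline_best k f xs) f"
proof -
  have f0: "0 \<le> f {}"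
    using nonneg_submodular_on_nonneg[OF assms(5)] by simp
  show "\<forall>j \<le> length xs. \<forall>(M, a) \<in> set_pmf (run (threshold_streaming e) k f (take j xs)).
           real (length M) \<le> 100 * real k * (1 + ln (real k)) / e ^ 2 \<and>
           real (length a) \<le> 100 / e ^ 2 * real k * (1 + ln (real k) + ln (real (length xs))) ^ nat \<lceil>100 / e ^ 2\<rceil>"
  proof (intro allI impI ballI, clarify)
    fix j M a assume "(M, a) \<in> set_pmf (run (threshold_streaming e) k f (take j xs))"
    note memory = threshold_streaming_memory[OF assms(1,2) distinct_take[OF assms(3)] f0 assms(4) this]
    then have "real (length a) \<le> 100 / e ^ 2 * real k * (1 + ln (real k))"
      by simp
    then show "real (length M) \<le> 100 * real k * (1 + ln (real k)) / e ^ 2 \<and>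
        real (length a) \<le> 100 / e ^ 2 * real k * (1 + ln (real k) + ln (real (length xs))) ^ nat \<lceil>100 / e ^ 2\<rceil>"
      using memory(2) le_mult_power_log[of "100 / e ^ 2" k] assms(1,4) by simp
  qed
  show "\<forall>S \<in> set_pmf (stream_output (threshold_streaming e) offline_best k f xs). card S \<le> k"
    by (simp add: stream_output_offline_best card_best_subset)
  show "\<forall>T. T \<subseteq> set xs \<and> card T \<le> k \<longrightarrow>
      f T / (3 + e) \<le> measure_pmf.expectation (stream_output (threshold_streaming e) offline_best k f xs) f"
    using threshold_streaming_approx[OF assms(1-3,5,4)] by blast
qed

theorem theorem1p1:
  shows "\<exists>C::real. \<forall>\<epsilon>::real. 0 < \<epsilon> \<and> \<epsilon> \<le> 1 \<longrightarrow>
    (\<exists>(st::stepfn) (fin::finfn) (D::real).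
      \<forall>(f::'a set \<Rightarrow> real) (xs::'a list) (k::nat).
        distinct xs \<and> 1 \<le> k \<and> nonneg_submodular_on (set xs) f \<longrightarrow>
          \<comment> \<open>memory bounds at every point of the stream\<close>
          (\<forall>j \<le> length xs. \<forall>(M, a) \<in> set_pmf (run st k f (take j xs)).
              real (length M) \<le> C * real k * (1 + ln (real k)) / \<epsilon>^2 \<and>
              real (length a) \<le> D * real k * (1 + ln (real k) + ln (real (length xs))) ^ nat \<lceil>D\<rceil>) \<and>
          \<comment> \<open>feasibility\<close>
          (\<forall>S \<in> set_pmf (stream_output st fin k f xs). card S \<le> k) \<and>
          \<comment> \<open>approximation ratio\<close>
          (\<forall>T. T \<subseteq> set xs \<and> card T \<le> k \<longrightarrow>
              f T / (3 + \<epsilon>) \<le> measure_pmf.expectation (stream_output st fin k f xs) f))"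
  apply (rule exI[of _ 100], intro allI impI)
  subgoal for \<epsilon>
    by (intro exI[of _ "threshold_streaming \<epsilon>"] exI[of _ offline_best] exI[of _ "100 / \<epsilon> ^ 2"] allI impI,
        elim conjE, intro conjI; rule threshold_streaming_guarantees; simp)
  done

end
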